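(* Let $n,n'\in\mathbb{N}$, $\mathbb{K}$ a field, $R=\mathbb{K}[X_1,\ldots,X_n]$, $R'=\mathbb{K}[X_1,\ldots,X_{n'}]$, and let $J'\subsetneq I'\subset R'$ be monomial ideals. Let $\phi:\mathbb{N}^n\to\mathbb{N}^{n'}$ be a monotonic map, let $\Phi:R\to R'$ be the $\mathbb{K}$-linear map with $\Phi(X^a)=X^{\phi(a)}$ on monomials, and set $I:=\Phi^{-1}(I')$, $J:=\Phi^{-1}(J')$. Choose $g\in\mathbb{N}^n$ and $g'\in\mathbb{N}^{n'}$ such that every minimal generator of $I$ and $J$ divides $X^g$ and every minimal generator of $I'$ and $J'$ divides $X^{g'}$. Let $\ell\in\mathbb{Z}$ and assume $\phi$ changes the Stanley depth by $\ell$ with respect to $g$ and $g'$. Then (i) $I$ and $J$ are monomial ideals, and (ii) $\operatorname{sdepth} I/J \ge \operatorname{sdepth} I'/J' + \ell$.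
   Context: $\mathbb{N}^n$ carries the componentwise partial order; $[a,b]=\{c: a\le c\le b\}$; a map is monotonic if it preserves this order. A monotonic map $\phi:\mathbb{N}^n\to\mathbb{N}^{n'}$ changes the Stanley depth by $\ell\in\mathbb{Z}$ with respect to $g\in\mathbb{N}^n$ and $g'\in\mathbb{N}^{n'}$ if (1) $\phi(g)\le g'$, and (2) for every interval $[a',b']\subset[0,g']$, the set $\phi^{-1}([a',b'])\cap[0,g]$ is a finite disjoint union $\bigcup_i[a^i,b^i]$ of intervals with $\#\{j\in[n]: b^i_j=g_j\}\ge\#\{j\in[n']: b'_j=g'_j\}+\ell$ for all $i$. Stanley depth: with the fine multigrading, a Stanley decomposition of a finitely generated multigraded module $M$ is a finite family $(\mathbb{K}[Z_k], m_k)$ with $m_k$ homogeneous, $Z_k$ subsets of the variables, $m_k\mathbb{K}[Z_k]$ free over $\mathbb{K}[Z_k]$, and $M=\bigoplus_k m_k\mathbb{K}[Z_k]$ as multigraded $\mathbb{K}$-vector spaces; its depth is $\min_k|Z_k|$, and $\operatorname{sdepth}M$ is the maximal depth of a Stanley decomposition. *)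

theory Defs
  imports Main "HOL-Library.Extended_Real"
begin

text \<open>Exponent vectors in N^n are modelled as functions nat => nat vanishing
  outside {..<n}; the order is the pointwise (componentwise) order on functions.
  The monomial X^a is identified with its exponent vector a, and a monomial
  ideal of K[X_1..X_n] with the set of exponents of the monomials it contains
  (an upward closed subset of N^n).\<close>

definition Nn :: "nat \<Rightarrow> (nat \<Rightarrow> nat) set" where
  "Nn n = {a. \<forall>i\<ge>n. a i = 0}"

definition monomial_ideal :: "nat \<Rightarrow> (nat \<Rightarrow> nat) set \<Rightarrow> bool" where
  "monomial_ideal n I \<longleftrightarrow> I \<subseteq> Nn n \<and> (\<forall>a\<in>I. \<forall>b\<in>Nn n. a \<le> b \<longrightarrow> b \<in> I)"

definition min_gens :: "(nat \<Rightarrow> nat) set \<Rightarrow> (nat \<Rightarrow> nat) set" where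
  "min_gens I = {a \<in> I. \<forall>b\<in>I. b \<le> a \<longrightarrow> b = a}"

definition changes_sdepth ::
  "nat \<Rightarrow> nat \<Rightarrow> ((nat \<Rightarrow> nat) \<Rightarrow> (nat \<Rightarrow> nat)) \<Rightarrow> int \<Rightarrow> (nat \<Rightarrow> nat) \<Rightarrow> (nat \<Rightarrow> nat) \<Rightarrow> bool" where
  "changes_sdepth n n' \<phi> l g g' \<longleftrightarrow>
     \<phi> g \<le> g' \<and>
     (\<forall>a'\<in>Nn n'. \<forall>b'\<in>Nn n'. a' \<le> b' \<and> b' \<le> g' \<longrightarrow>
       (\<exists>P. finite P \<and>
            (\<forall>(a, b)\<in>P. a \<in> Nn n \<and> b \<in> Nn n \<and> a \<le> b) \<and>
            (\<forall>p\<in>P. \<forall>q\<in>P. p \<noteq> q \<longrightarrow> {fst p..snd p} \<inter> {fst q..snd q} = {}) \<and>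
            (\<Union>p\<in>P. {fst p..snd p}) = {c \<in> Nn n. c \<le> g \<and> \<phi> c \<in> {a'..b'}} \<and>
            (\<forall>(a, b)\<in>P. int (card {j. j < n \<and> b j = g j})
                          \<ge> int (card {j. j < n' \<and> b' j = g' j}) + l)))"

text \<open>Stanley space m K[Z], as the set of multidegrees of its monomials.\<close>
definition sspace :: "nat \<Rightarrow> (nat \<Rightarrow> nat) \<Rightarrow> nat set \<Rightarrow> (nat \<Rightarrow> nat) set" where
  "sspace n m Z = {(\<lambda>i. m i + b i) | b. b \<in> Nn n \<and> (\<forall>i. i \<notin> Z \<longrightarrow> b i = 0)}"

text \<open>Stanley decomposition of I/J (I, J monomial, J inside I) in the fine
  multigrading: homogeneous generators m_k with degree in I - J, the spaces
  m_k K[Z_k] free (no monomial falls into J), and I/J their direct sum.\<close>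
definition stanley_decomp ::
  "nat \<Rightarrow> (nat \<Rightarrow> nat) set \<Rightarrow> (nat \<Rightarrow> nat) set \<Rightarrow> ((nat \<Rightarrow> nat) \<times> nat set) set \<Rightarrow> bool" where
  "stanley_decomp n I J D \<longleftrightarrow> finite D \<and>
     (\<forall>(m, Z)\<in>D. m \<in> Nn n \<and> Z \<subseteq> {..<n} \<and> sspace n m Z \<subseteq> I - J) \<and>
     (\<forall>p\<in>D. \<forall>q\<in>D. p \<noteq> q \<longrightarrow> sspace n (fst p) (snd p) \<inter> sspace n (fst q) (snd q) = {}) \<and>
     (\<Union>p\<in>D. sspace n (fst p) (snd p)) = I - J"

definition sdepth_depth :: "((nat \<Rightarrow> nat) \<times> nat set) set \<Rightarrow> ereal" where
  "sdepth_depth D = (INF p\<in>D. ereal (real (card (snd p))))"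

text \<open>Stanley depth of I/J (the zero module gets depth +infinity via the empty decomposition).\<close>
definition sdepth :: "nat \<Rightarrow> (nat \<Rightarrow> nat) set \<Rightarrow> (nat \<Rightarrow> nat) set \<Rightarrow> ereal" where
  "sdepth n I J = (SUP D\<in>{D. stanley_decomp n I J D}. sdepth_depth D)"

end

(*
  A Stanley decomposition of I/J amounts to a partition of the finite poset
  P = {c \<le> g : c \<in> I - J} into intervals (Herzog, Vladoiu, Zheng).  A Stanley space
  m K[Z] with m \<le> g meets [0, g] in the interval from m to its corner, which agrees
  with g on Z and with m elsewhere; conversely an interval [a, b] of P is the trace of
  the spaces c K[Z_b], where Z_b = {j : b_j = g_j} and c runs over [a, b] with c = a on
  Z_b, and these spaces are disjoint and exhaust the monomials x with inf x g \<in> [a, b].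
  Hence a decomposition of depth d yields intervals whose tops meet g in at least d
  coordinates, and vice versa.  Cutting a decomposition of I'/J' at g', pulling every
  interval back along \<phi> (this is exactly what changing the Stanley depth by l provides)
  and lifting the resulting interval partition of P_{I/J} gives a Stanley decomposition
  of I/J whose depth exceeds the original one by at least l.
*)
theory Submission
  imports Defs
begin

lemma Nn_downward_closed: "b \<in> Nn n \<Longrightarrow> c \<le> b \<Longrightarrow> c \<in> Nn n"
  unfolding Nn_def le_fun_def by (simp, metis le_zero_eq)

lemma finite_atMost_Nn:
  assumes "b \<in> Nn n"
  shows "finite {..b}"
proof (rule finite_subset)
  let ?M = "Max (b ` {..<n})"
  show "{..b} \<subseteq> {c. \<forall>i. (i \<in> {..<n} \<longrightarrow> c i \<in> {..?M}) \<and> (i \<notin> {..<n} \<longrightarrow> c i = 0)}"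
  proof (intro subsetI CollectI allI conjI impI)
    fix c i assume "c \<in> {..b}"
    then have ci: "c i \<le> b i" by (simp add: le_fun_def)
    show "c i \<in> {..?M}" if "i \<in> {..<n}"
      using le_trans[OF ci Max_ge[of "b ` {..<n}" "b i"]] that by simp
    show "c i = 0" if "i \<notin> {..<n}"
      using ci assms that unfolding Nn_def by simp
  qed
  show "finite {c. \<forall>i. (i \<in> {..<n} \<longrightarrow> c i \<in> {..?M}) \<and> (i \<notin> {..<n} \<longrightarrow> c i = (0::nat))}"
    by (rule finite_set_of_finite_funs) simp_all
qed

lemma ex_min_gens_le:
  assumes "S \<subseteq> Nn n" and "x \<in> S"
  shows "\<exists>m\<in>min_gens S. m \<le> x"
proof -
  obtain b where b: "b \<in> S" "b \<le> x"
    and least: "\<And>c. c \<in> S \<Longrightarrow> c \<le> x \<Longrightarrow> (\<Sum>i<n. b i) \<le> (\<Sum>i<n. c i)"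
    using ex_has_least_nat[of "\<lambda>c. c \<in> S \<and> c \<le> x" x "\<lambda>c. \<Sum>i<n. c i"] assms(2) by auto
  have "c = b" if c: "c \<in> S" "c \<le> b" for c
  proof (rule ccontr)
    assume "c \<noteq> b"
    then obtain i where "c i \<noteq> b i" by blast
    moreover have "i < n"
      using \<open>c i \<noteq> b i\<close> c(1) b(1) assms(1) unfolding Nn_def
      by (metis (mono_tags, lifting) mem_Collect_eq not_less subsetD)
    moreover have "c i < b i" using \<open>c i \<noteq> b i\<close> le_funD[OF c(2), of i] by simp
    ultimately have "(\<Sum>i<n. c i) < (\<Sum>i<n. b i)"
      using c(2) by (intro sum_strict_mono_ex1) (auto simp: le_fun_def)
    with least[OF c(1) order_trans[OF c(2) b(2)]] show False by simp
  qed
  then show ?thesis using b unfolding min_gens_def by blast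
qed

lemma monomial_ideal_mem_iff_inf:
  assumes "monomial_ideal n I" and "\<forall>a\<in>min_gens I. a \<le> g" and "x \<in> Nn n"
  shows "x \<in> I \<longleftrightarrow> inf x g \<in> I"
proof
  assume "x \<in> I"
  then obtain m where "m \<in> min_gens I" "m \<le> x"
    using ex_min_gens_le[of I n x] assms(1) unfolding monomial_ideal_def by blast
  then have "m \<in> I" "m \<le> inf x g" using assms(2) unfolding min_gens_def by auto
  moreover have "inf x g \<in> Nn n" using assms(3) Nn_downward_closed by simp
  ultimately show "inf x g \<in> I" using assms(1) unfolding monomial_ideal_def by blast
next
  assume "inf x g \<in> I"
  then show "x \<in> I" using assms(1,3) unfolding monomial_ideal_def by (meson inf.cobounded1)
qed

lemma monomial_ideal_preimage:
  assumes "monomial_ideal n' K" and "\<phi> ` Nn n \<subseteq> Nn n'" and "mono_on (Nn n) \<phi>"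
  shows "monomial_ideal n {a \<in> Nn n. \<phi> a \<in> K}"
  unfolding monomial_ideal_def
proof (intro conjI ballI impI)
  fix a b assume "a \<in> {a \<in> Nn n. \<phi> a \<in> K}" "b \<in> Nn n" "a \<le> b"
  moreover from this have "\<phi> a \<le> \<phi> b" using assms(3) by (auto dest: mono_onD)
  ultimately show "b \<in> {a \<in> Nn n. \<phi> a \<in> K}"
    using assms(1,2) unfolding monomial_ideal_def by blast
qed auto

section \<open>Stanley spaces\<close>

lemma sspace_subset_Nn: "m \<in> Nn n \<Longrightarrow> sspace n m Z \<subseteq> Nn n"
  unfolding sspace_def Nn_def by auto

lemma mem_sspace_iff:
  "x \<in> sspace n m Z \<longleftrightarrow> (\<exists>y\<in>Nn n. (\<forall>i. i \<notin> Z \<longrightarrow> y i = 0) \<and> x = (\<lambda>i. m i + y i))"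
  unfolding sspace_def by blast

lemma sspaceD: "x \<in> sspace n m Z \<Longrightarrow> m \<le> x \<and> (\<forall>j. j \<notin> Z \<longrightarrow> x j = m j)"
  unfolding mem_sspace_iff le_fun_def by auto

lemma sspaceI:
  assumes "m \<le> x" "x \<in> Nn n" "\<forall>j. j \<notin> Z \<longrightarrow> x j \<le> m j"
  shows "x \<in> sspace n m Z"
  unfolding mem_sspace_iff
proof (intro bexI conjI allI impI)
  show "(\<lambda>i. x i - m i) \<in> Nn n" using assms(2) unfolding Nn_def by auto
  show "(\<lambda>i. x i - m i) j = 0" if "j \<notin> Z" for j using assms(3) that by simp
  show "x = (\<lambda>i. m i + (x i - m i))" using assms(1) by (simp add: le_fun_def)
qed

lemma sspace_base_unique:
  assumes "x \<in> sspace n c Z" "x \<in> sspace n c' Z" "\<forall>j\<in>Z. c j = c' j"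
  shows "c = c'"
proof
  fix j
  show "c j = c' j"
    using sspaceD[OF assms(1)] sspaceD[OF assms(2)] assms(3) by (cases "j \<in> Z") auto
qed

section \<open>From interval partitions to Stanley decompositions\<close>

definition interval_partition ::
  "nat \<Rightarrow> ((nat \<Rightarrow> nat) \<times> (nat \<Rightarrow> nat)) set \<Rightarrow> (nat \<Rightarrow> nat) set \<Rightarrow> bool" where
  "interval_partition n Q S \<longleftrightarrow> finite Q \<and>
     (\<forall>(a, b)\<in>Q. a \<in> Nn n \<and> b \<in> Nn n \<and> a \<le> b) \<and>
     (\<forall>p\<in>Q. \<forall>q\<in>Q. p \<noteq> q \<longrightarrow> {fst p..snd p} \<inter> {fst q..snd q} = {}) \<and>
     (\<Union>p\<in>Q. {fst p..snd p}) = S"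

definition maxed_coords :: "nat \<Rightarrow> (nat \<Rightarrow> nat) \<Rightarrow> (nat \<Rightarrow> nat) \<Rightarrow> nat set" where
  "maxed_coords n g b = {j. j < n \<and> b j = g j}"

lemma interval_partitionD:
  assumes "interval_partition n Q S"
  shows "finite Q"
    and "(a, b) \<in> Q \<Longrightarrow> a \<in> Nn n \<and> b \<in> Nn n \<and> a \<le> b"
    and "p \<in> Q \<Longrightarrow> q \<in> Q \<Longrightarrow> p \<noteq> q \<Longrightarrow> {fst p..snd p} \<inter> {fst q..snd q} = {}"
    and "(\<Union>p\<in>Q. {fst p..snd p}) = S"
  using assms unfolding interval_partition_def by fast+

lemma interval_partition_top_le:
  assumes "interval_partition n Q S" "S \<subseteq> {..g}" "(a, b) \<in> Q"
  shows "b \<le> g"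
proof -
  have "b \<in> (\<Union>p\<in>Q. {fst p..snd p})" using interval_partitionD(2)[OF assms(1,3)] assms(3) by force
  then show ?thesis using interval_partitionD(4)[OF assms(1)] assms(2) by auto
qed

lemma sspace_inf_in_interval:
  assumes "a \<le> c" "c \<le> b" "b \<le> g" "x \<in> sspace n c (maxed_coords n g b)"
  shows "inf x g \<in> {a..b}"
proof -
  have x: "c \<le> x" "\<And>j. j \<notin> maxed_coords n g b \<Longrightarrow> x j = c j" using sspaceD[OF assms(4)] by auto
  have "inf x g \<le> b"
  proof (rule le_funI)
    fix j
    show "inf x g j \<le> b j"
    proof (cases "j \<in> maxed_coords n g b")
      case True
      then show ?thesis by (simp add: maxed_coords_def)
    next
      case False
      then show ?thesis using x(2)[of j] le_funD[OF assms(2), of j] by (simp add: le_infI1)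
    qed
  qed
  moreover have "a \<le> inf x g" using assms x(1) by (meson le_inf_iff order_trans)
  ultimately show ?thesis by simp
qed

lemma ex_sspace_of_inf_in_interval:
  assumes "x \<in> Nn n" "a \<in> Nn n" "b \<le> g" "inf x g \<in> {a..b}"
  defines "W \<equiv> maxed_coords n g b"
  shows "\<exists>c\<in>{a..b}. (\<forall>j\<in>W. c j = a j) \<and> x \<in> sspace n c W"
proof (intro bexI conjI)
  define c where "c j = (if j \<in> W then a j else x j)" for j
  have bounds: "a j \<le> min (x j) (g j)" "min (x j) (g j) \<le> b j" "b j \<le> g j" for j
    using assms(3,4) by (auto simp: le_fun_def inf_nat_def)
  have outside: "a j \<le> x j \<and> x j \<le> b j" if "j \<notin> W" for j
  proof (cases "j < n")
    case True
    then have "b j < g j" using that bounds(3)[of j] unfolding W_def maxed_coords_def by auto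
    then show ?thesis using bounds(1,2)[of j] by auto
  next
    case False
    have "a j = 0" using assms(2) False unfolding Nn_def by simp
    moreover have "x j = 0" using assms(1) False unfolding Nn_def by simp
    ultimately show ?thesis by simp
  qed
  have "a j \<le> c j \<and> c j \<le> b j" for j
    using outside[of j] order_trans[OF bounds(1,2), of j] by (simp add: c_def)
  then show "c \<in> {a..b}" by (simp add: le_fun_def)
  show "\<forall>j\<in>W. c j = a j" by (simp add: c_def)
  have "c j \<le> x j" for j using bounds(1)[of j] by (simp add: c_def)
  then show "x \<in> sspace n c W" using assms(1) by (intro sspaceI) (simp_all add: le_fun_def c_def)
qed

definition stanley_lift ::
  "nat \<Rightarrow> (nat \<Rightarrow> nat) \<Rightarrow> ((nat \<Rightarrow> nat) \<times> (nat \<Rightarrow> nat)) set \<Rightarrow> ((nat \<Rightarrow> nat) \<times> nat set) set" where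
  "stanley_lift n g Q = (\<Union>(a, b)\<in>Q.
     (\<lambda>c. (c, maxed_coords n g b)) ` {c \<in> {a..b}. \<forall>j\<in>maxed_coords n g b. c j = a j})"

lemma mem_stanley_lift_iff:
  "(c, Z) \<in> stanley_lift n g Q \<longleftrightarrow>
     (\<exists>(a, b)\<in>Q. c \<in> {a..b} \<and> (\<forall>j\<in>maxed_coords n g b. c j = a j) \<and> Z = maxed_coords n g b)"
  unfolding stanley_lift_def by blast

lemma stanley_lift_Nn:
  assumes "interval_partition n Q S" "(c, Z) \<in> stanley_lift n g Q"
  shows "c \<in> Nn n \<and> Z \<subseteq> {..<n}"
proof -
  obtain a b where "(a, b) \<in> Q" "c \<in> {a..b}" "Z = maxed_coords n g b"
    using assms(2) unfolding mem_stanley_lift_iff by blast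
  then show ?thesis
    using interval_partitionD(2)[OF assms(1)] Nn_downward_closed[of b n c]
    by (auto simp: maxed_coords_def)
qed

lemma finite_stanley_lift:
  assumes "interval_partition n Q S"
  shows "finite (stanley_lift n g Q)"
  unfolding stanley_lift_def
  using interval_partitionD(1,2)[OF assms]
  by (auto intro!: finite_UN_I finite_subset[OF _ finite_atMost_Nn])

lemma UN_stanley_lift:
  assumes Q: "interval_partition n Q S" and "S \<subseteq> {..g}"
  shows "(\<Union>p\<in>stanley_lift n g Q. sspace n (fst p) (snd p)) = {x \<in> Nn n. inf x g \<in> S}"
proof (intro equalityI subsetI)
  fix x assume "x \<in> (\<Union>p\<in>stanley_lift n g Q. sspace n (fst p) (snd p))"
  then obtain a b c where ab: "(a, b) \<in> Q" "c \<in> {a..b}" and x: "x \<in> sspace n c (maxed_coords n g b)"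
    unfolding stanley_lift_def by auto
  have "a \<le> c" "c \<le> b" using ab(2) by auto
  then have "inf x g \<in> {a..b}"
    using sspace_inf_in_interval interval_partition_top_le[OF Q assms(2) ab(1)] x by blast
  then have "inf x g \<in> S" using interval_partitionD(4)[OF Q] ab(1) by force
  moreover have "c \<in> Nn n"
    using interval_partitionD(2)[OF Q ab(1)] ab(2) Nn_downward_closed[of b n c] by simp
  then have "x \<in> Nn n" using x sspace_subset_Nn by blast
  ultimately show "x \<in> {x \<in> Nn n. inf x g \<in> S}" by simp
next
  fix x assume x: "x \<in> {x \<in> Nn n. inf x g \<in> S}"
  then obtain a b where ab: "(a, b) \<in> Q" "inf x g \<in> {a..b}"
    using interval_partitionD(4)[OF Q] by auto
  then obtain c where c: "c \<in> {a..b}" "\<forall>j\<in>maxed_coords n g b. c j = a j"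
    "x \<in> sspace n c (maxed_coords n g b)"
    using ex_sspace_of_inf_in_interval[of x n a b g] x interval_partition_top_le[OF Q assms(2)]
      interval_partitionD(2)[OF Q] by blast
  have "(c, maxed_coords n g b) \<in> stanley_lift n g Q"
    unfolding mem_stanley_lift_iff using ab(1) c(1,2) by blast
  then show "x \<in> (\<Union>p\<in>stanley_lift n g Q. sspace n (fst p) (snd p))"
    using c(3) by (metis UN_iff fst_conv snd_conv)
qed

lemma stanley_lift_disjoint:
  assumes Q: "interval_partition n Q S" and "S \<subseteq> {..g}"
    and p: "p \<in> stanley_lift n g Q" and q: "q \<in> stanley_lift n g Q" and "p \<noteq> q"
  shows "sspace n (fst p) (snd p) \<inter> sspace n (fst q) (snd q) = {}"
proof (rule ccontr)
  note below_g = interval_partition_top_le[OF Q assms(2)]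
  obtain a b where ab: "(a, b) \<in> Q" "fst p \<in> {a..b}" "\<forall>j\<in>maxed_coords n g b. fst p j = a j"
    "snd p = maxed_coords n g b"
    using p mem_stanley_lift_iff[of "fst p" "snd p"] by auto
  obtain a' b' where ab': "(a', b') \<in> Q" "fst q \<in> {a'..b'}" "\<forall>j\<in>maxed_coords n g b'. fst q j = a' j"
    "snd q = maxed_coords n g b'"
    using q mem_stanley_lift_iff[of "fst q" "snd q"] by auto
  assume "sspace n (fst p) (snd p) \<inter> sspace n (fst q) (snd q) \<noteq> {}"
  then obtain x where x: "x \<in> sspace n (fst p) (snd p)" "x \<in> sspace n (fst q) (snd q)" by blast
  have "inf x g \<in> {a..b}"
    using sspace_inf_in_interval[of a "fst p" b g x n] below_g[OF ab(1)] x(1) ab(2,4) by simp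
  moreover have "inf x g \<in> {a'..b'}"
    using sspace_inf_in_interval[of a' "fst q" b' g x n] below_g[OF ab'(1)] x(2) ab'(2,4) by simp
  ultimately have "inf x g \<in> {a..b} \<inter> {a'..b'}" by blast
  then have same: "(a, b) = (a', b')"
    using interval_partitionD(3)[OF Q ab(1) ab'(1)] by (metis empty_iff fst_conv snd_conv)
  then have "fst p = fst q"
    using sspace_base_unique[of x n "fst p" "snd p" "fst q"] x ab ab' by auto
  then show False using \<open>p \<noteq> q\<close> same ab(4) ab'(4) by (simp add: prod_eq_iff)
qed

lemma stanley_decomp_stanley_lift:
  assumes I: "monomial_ideal n I" "\<forall>a\<in>min_gens I. a \<le> g"
    and J: "monomial_ideal n J" "\<forall>a\<in>min_gens J. a \<le> g"
    and Q: "interval_partition n Q {c \<in> Nn n. c \<le> g \<and> c \<in> I - J}"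
  shows "stanley_decomp n I J (stanley_lift n g Q)"
proof -
  have below_g: "{c \<in> Nn n. c \<le> g \<and> c \<in> I - J} \<subseteq> {..g}" by auto
  have mem_iff: "x \<in> I - J \<longleftrightarrow> inf x g \<in> I - J" if "x \<in> Nn n" for x
    using monomial_ideal_mem_iff_inf[OF I that] monomial_ideal_mem_iff_inf[OF J that] by blast
  have "{x \<in> Nn n. inf x g \<in> {c \<in> Nn n. c \<le> g \<and> c \<in> I - J}} = I - J"
  proof (intro equalityI subsetI)
    fix x assume "x \<in> {x \<in> Nn n. inf x g \<in> {c \<in> Nn n. c \<le> g \<and> c \<in> I - J}}"
    then show "x \<in> I - J" using mem_iff by blast
  next
    fix x assume x: "x \<in> I - J"
    then have "x \<in> Nn n" using I(1) unfolding monomial_ideal_def by blast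
    then show "x \<in> {x \<in> Nn n. inf x g \<in> {c \<in> Nn n. c \<le> g \<and> c \<in> I - J}}"
      using x mem_iff[of x] Nn_downward_closed[of x n "inf x g"] by simp
  qed
  then have covers: "(\<Union>p\<in>stanley_lift n g Q. sspace n (fst p) (snd p)) = I - J"
    unfolding UN_stanley_lift[OF Q below_g] .
  have "\<forall>(m, Z)\<in>stanley_lift n g Q. m \<in> Nn n \<and> Z \<subseteq> {..<n} \<and> sspace n m Z \<subseteq> I - J"
    using stanley_lift_Nn[OF Q] covers by fastforce
  then show ?thesis
    unfolding stanley_decomp_def using finite_stanley_lift[OF Q] stanley_lift_disjoint[OF Q below_g] covers
    by blast
qed

lemma sdepth_depth_stanley_lift:
  assumes "\<forall>(a, b)\<in>Q. \<delta> \<le> ereal (real (card (maxed_coords n g b)))"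
  shows "\<delta> \<le> sdepth_depth (stanley_lift n g Q)"
  unfolding sdepth_depth_def
proof (rule INF_greatest)
  fix p assume "p \<in> stanley_lift n g Q"
  then show "\<delta> \<le> ereal (real (card (snd p)))"
    using assms mem_stanley_lift_iff[of "fst p" "snd p"] by auto
qed

section \<open>From Stanley decompositions to interval partitions\<close>

definition stanley_corner :: "(nat \<Rightarrow> nat) \<Rightarrow> (nat \<Rightarrow> nat) \<Rightarrow> nat set \<Rightarrow> nat \<Rightarrow> nat" where
  "stanley_corner g m Z = (\<lambda>j. if j \<in> Z then g j else m j)"

lemma stanley_corner_le: "m \<le> g \<Longrightarrow> stanley_corner g m Z \<le> g"
  unfolding stanley_corner_def le_fun_def by simp

lemma subset_maxed_coords_stanley_corner:
  "Z \<subseteq> {..<n} \<Longrightarrow> Z \<subseteq> maxed_coords n g (stanley_corner g m Z)"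
  unfolding maxed_coords_def stanley_corner_def by auto

lemma sspace_inter_atMost:
  assumes "Z \<subseteq> {..<n}" "m \<in> Nn n" "m \<le> g"
  shows "sspace n m Z \<inter> {..g} = {m..stanley_corner g m Z}"
proof (intro equalityI subsetI)
  fix x assume "x \<in> sspace n m Z \<inter> {..g}"
  then show "x \<in> {m..stanley_corner g m Z}"
    using sspaceD[of x n m Z] by (auto simp: stanley_corner_def le_fun_def)
next
  fix x assume x: "x \<in> {m..stanley_corner g m Z}"
  have corner: "stanley_corner g m Z \<in> Nn n" "stanley_corner g m Z \<le> g"
    using assms unfolding stanley_corner_def Nn_def le_fun_def by auto
  have "x \<le> g" using x corner(2) by auto
  moreover have "x \<in> sspace n m Z"
  proof (rule sspaceI)
    show "m \<le> x" using x by simp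
    show "x \<in> Nn n" using x corner(1) Nn_downward_closed by auto
    show "\<forall>j. j \<notin> Z \<longrightarrow> x j \<le> m j"
    proof (intro allI impI)
      fix j assume "j \<notin> Z"
      then show "x j \<le> m j" using le_funD[of x "stanley_corner g m Z" j] x by (simp add: stanley_corner_def)
    qed
  qed
  ultimately show "x \<in> sspace n m Z \<inter> {..g}" by simp
qed

definition stanley_cut ::
  "(nat \<Rightarrow> nat) \<Rightarrow> ((nat \<Rightarrow> nat) \<times> nat set) set \<Rightarrow> ((nat \<Rightarrow> nat) \<times> (nat \<Rightarrow> nat)) set" where
  "stanley_cut g D = (\<lambda>(m, Z). (m, stanley_corner g m Z)) ` {p \<in> D. fst p \<le> g}"

lemma mem_stanley_cut_iff:
  "(a, b) \<in> stanley_cut g D \<longleftrightarrow> (\<exists>Z. (a, Z) \<in> D \<and> a \<le> g \<and> b = stanley_corner g a Z)"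
  unfolding stanley_cut_def by force

lemma interval_partition_stanley_cut:
  assumes "stanley_decomp n I J D"
  shows "interval_partition n (stanley_cut g D) ((I - J) \<inter> {..g})"
proof -
  have D: "finite D"
    "\<And>m Z. (m, Z) \<in> D \<Longrightarrow> m \<in> Nn n \<and> Z \<subseteq> {..<n} \<and> sspace n m Z \<subseteq> I - J"
    "\<And>p q. p \<in> D \<Longrightarrow> q \<in> D \<Longrightarrow> p \<noteq> q \<Longrightarrow> sspace n (fst p) (snd p) \<inter> sspace n (fst q) (snd q) = {}"
    "(\<Union>p\<in>D. sspace n (fst p) (snd p)) = I - J"
    using assms unfolding stanley_decomp_def by fast+
  have cut: "{m..stanley_corner g m Z} = sspace n m Z \<inter> {..g}" if "(m, Z) \<in> D" "m \<le> g" for m Z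
    using sspace_inter_atMost D(2)[OF that(1)] that(2) by simp
  have "finite (stanley_cut g D)" unfolding stanley_cut_def using D(1) by simp
  moreover have "\<forall>(a, b)\<in>stanley_cut g D. a \<in> Nn n \<and> b \<in> Nn n \<and> a \<le> b"
    using D(2) unfolding stanley_cut_def stanley_corner_def Nn_def le_fun_def by fastforce
  moreover have "{fst p..snd p} \<inter> {fst q..snd q} = {}"
    if p: "p \<in> stanley_cut g D" and q: "q \<in> stanley_cut g D" and "p \<noteq> q" for p q
  proof -
    have "\<exists>Z. (fst p, Z) \<in> D \<and> fst p \<le> g \<and> snd p = stanley_corner g (fst p) Z"
      using p mem_stanley_cut_iff[of "fst p" "snd p"] by simp
    then obtain Z where Z: "(fst p, Z) \<in> D" "fst p \<le> g" "snd p = stanley_corner g (fst p) Z"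
      by blast
    have "\<exists>Z. (fst q, Z) \<in> D \<and> fst q \<le> g \<and> snd q = stanley_corner g (fst q) Z"
      using q mem_stanley_cut_iff[of "fst q" "snd q"] by simp
    then obtain Z' where Z': "(fst q, Z') \<in> D" "fst q \<le> g" "snd q = stanley_corner g (fst q) Z'"
      by blast
    from \<open>p \<noteq> q\<close> Z(3) Z'(3) have "(fst p, Z) \<noteq> (fst q, Z')" by (auto simp: prod_eq_iff)
    then show ?thesis
      using cut[OF Z(1,2)] cut[OF Z'(1,2)] D(3)[OF Z(1) Z'(1)] Z(3) Z'(3) by auto
  qed
  moreover have "x \<in> (\<Union>p\<in>stanley_cut g D. {fst p..snd p}) \<longleftrightarrow> x \<in> (I - J) \<inter> {..g}" for x
  proof -
    have "x \<in> (\<Union>p\<in>stanley_cut g D. {fst p..snd p})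
        \<longleftrightarrow> (\<exists>(m, Z)\<in>D. m \<le> g \<and> x \<in> sspace n m Z \<and> x \<le> g)"
      using cut unfolding stanley_cut_def by fastforce
    also have "\<dots> \<longleftrightarrow> (\<exists>(m, Z)\<in>D. x \<in> sspace n m Z) \<and> x \<le> g"
      using sspaceD order_trans by blast
    also have "\<dots> \<longleftrightarrow> x \<in> (I - J) \<inter> {..g}"
      using D(4) by fastforce
    finally show ?thesis .
  qed
  ultimately show ?thesis unfolding interval_partition_def by blast
qed

section \<open>Pulling back along a map that changes the Stanley depth\<close>

lemma changes_sdepthD:
  assumes "changes_sdepth n n' \<phi> l g g'"
    and "a' \<in> Nn n'" "b' \<in> Nn n'" "a' \<le> b'" "b' \<le> g'"
  shows "\<exists>P. interval_partition n P {c \<in> Nn n. c \<le> g \<and> \<phi> c \<in> {a'..b'}} \<and>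
    (\<forall>(a, b)\<in>P. int (card (maxed_coords n g b)) \<ge> int (card (maxed_coords n' g' b')) + l)"
  using conjunct2[OF assms(1)[unfolded changes_sdepth_def], rule_format, OF assms(2,3) conjI[OF assms(4,5)]]
  unfolding interval_partition_def maxed_coords_def conj_assoc .

lemma interval_partition_UN:
  assumes "finite K" and P: "\<And>k. k \<in> K \<Longrightarrow> interval_partition n (P k) (S k)"
    and S: "\<And>k k'. k \<in> K \<Longrightarrow> k' \<in> K \<Longrightarrow> k \<noteq> k' \<Longrightarrow> S k \<inter> S k' = {}"
  shows "interval_partition n (\<Union>k\<in>K. P k) (\<Union>k\<in>K. S k)"
  unfolding interval_partition_def
proof (intro conjI ballI impI)
  show "finite (\<Union>k\<in>K. P k)" using assms(1) interval_partitionD(1)[OF P] by simp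
  show "case p of (a, b) \<Rightarrow> a \<in> Nn n \<and> b \<in> Nn n \<and> a \<le> b" if "p \<in> (\<Union>k\<in>K. P k)" for p
    using interval_partitionD(2)[OF P] that by (cases p) blast
  have in_S: "{fst x..snd x} \<subseteq> S k" if "x \<in> P k" "k \<in> K" for x k
    using UN_upper[OF that(1), of "\<lambda>p. {fst p..snd p}"] interval_partitionD(4)[OF P[OF that(2)]] by simp
  fix x y assume "x \<in> (\<Union>k\<in>K. P k)" "y \<in> (\<Union>k\<in>K. P k)" "x \<noteq> y"
  then obtain k k' where x: "x \<in> P k" "k \<in> K" and y: "y \<in> P k'" "k' \<in> K" by blast
  show "{fst x..snd x} \<inter> {fst y..snd y} = {}"
  proof (cases "k = k'")
    case True
    then show ?thesis using interval_partitionD(3)[OF P[OF x(2)] x(1)] y(1) \<open>x \<noteq> y\<close> by simp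
  next
    case False
    then show ?thesis using Int_mono[OF in_S[OF x] in_S[OF y]] S[OF x(2) y(2) False] by simp
  qed
next
  have "(\<Union>x\<in>(\<Union>k\<in>K. P k). {fst x..snd x}) = (\<Union>k\<in>K. \<Union>x\<in>P k. {fst x..snd x})"
    by (rule UN_UN_flatten)
  also have "\<dots> = (\<Union>k\<in>K. S k)" using interval_partitionD(4)[OF P] by simp
  finally show "(\<Union>x\<in>(\<Union>k\<in>K. P k). {fst x..snd x}) = (\<Union>k\<in>K. S k)" .
qed

lemma interval_partition_preimage:
  assumes \<phi>: "changes_sdepth n n' \<phi> l g g'"
    and Q': "interval_partition n' Q' S'" "\<forall>(a', b')\<in>Q'. b' \<le> g'"
  shows "\<exists>Q. interval_partition n Q {c \<in> Nn n. c \<le> g \<and> \<phi> c \<in> S'} \<and>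
    (\<forall>(a, b)\<in>Q. \<exists>(a', b')\<in>Q'. int (card (maxed_coords n g b)) \<ge> int (card (maxed_coords n' g' b')) + l)"
proof -
  define S where "S q = {c \<in> Nn n. c \<le> g \<and> \<phi> c \<in> {fst q..snd q}}" for q
  have "\<forall>q\<in>Q'. \<exists>P. interval_partition n P (S q) \<and>
    (\<forall>(a, b)\<in>P. int (card (maxed_coords n g b)) \<ge> int (card (maxed_coords n' g' (snd q))) + l)"
  proof
    fix q assume "q \<in> Q'"
    then have "fst q \<in> Nn n' \<and> snd q \<in> Nn n' \<and> fst q \<le> snd q" "snd q \<le> g'"
      using interval_partitionD(2)[OF Q'(1), of "fst q" "snd q"] Q'(2) by auto
    then show "\<exists>P. interval_partition n P (S q) \<and>
      (\<forall>(a, b)\<in>P. int (card (maxed_coords n g b)) \<ge> int (card (maxed_coords n' g' (snd q))) + l)"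
      unfolding S_def using changes_sdepthD[OF \<phi>, of "fst q" "snd q"] by blast
  qed
  from bchoice[OF this] obtain P where "\<forall>q\<in>Q'. interval_partition n (P q) (S q) \<and>
      (\<forall>(a, b)\<in>P q. int (card (maxed_coords n g b)) \<ge> int (card (maxed_coords n' g' (snd q))) + l)"
    by blast
  then have P: "\<And>q. q \<in> Q' \<Longrightarrow> interval_partition n (P q) (S q)"
    and P_card: "\<And>q. q \<in> Q' \<Longrightarrow>
      \<forall>(a, b)\<in>P q. int (card (maxed_coords n g b)) \<ge> int (card (maxed_coords n' g' (snd q))) + l"
    by blast+
  have S_disjoint: "S q \<inter> S q' = {}" if "q \<in> Q'" "q' \<in> Q'" "q \<noteq> q'" for q q'
  proof -
    have "{fst q..snd q} \<inter> {fst q'..snd q'} = {}" by (rule interval_partitionD(3)[OF Q'(1) that])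
    then show ?thesis unfolding S_def disjoint_iff by (simp only: mem_Collect_eq) blast
  qed
  have "(\<Union>q\<in>Q'. S q) = {c \<in> Nn n. c \<le> g \<and> \<phi> c \<in> S'}"
    unfolding S_def interval_partitionD(4)[OF Q'(1), symmetric]
    by (simp only: UN_iff mem_Collect_eq set_eq_iff) blast
  moreover have "interval_partition n (\<Union>q\<in>Q'. P q) (\<Union>q\<in>Q'. S q)"
    using interval_partitionD(1)[OF Q'(1)] P S_disjoint by (rule interval_partition_UN)
  ultimately have "interval_partition n (\<Union>q\<in>Q'. P q) {c \<in> Nn n. c \<le> g \<and> \<phi> c \<in> S'}" by simp
  moreover have card: "\<exists>(a', b')\<in>Q'. int (card (maxed_coords n g b)) \<ge> int (card (maxed_coords n' g' b')) + l"
    if "(a, b) \<in> (\<Union>q\<in>Q'. P q)" for a b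
  proof -
    obtain q where "q \<in> Q'" "(a, b) \<in> P q" using \<open>(a, b) \<in> (\<Union>q\<in>Q'. P q)\<close> by blast
    then show ?thesis using P_card[of q] by (intro bexI[of _ q]) (auto simp: split_beta)
  qed
  then have "\<forall>(a, b)\<in>(\<Union>q\<in>Q'. P q). \<exists>(a', b')\<in>Q'.
      int (card (maxed_coords n g b)) \<ge> int (card (maxed_coords n' g' b')) + l"
    by blast
  ultimately show ?thesis by blast
qed

lemma sdepth_depth_le_card: "p \<in> D \<Longrightarrow> sdepth_depth D \<le> ereal (real (card (snd p)))"
  unfolding sdepth_depth_def by (rule INF_lower)

lemma sdepth_add_le:
  assumes "\<And>D'. stanley_decomp n' I' J' D' \<Longrightarrow>
    \<exists>D. stanley_decomp n I J D \<and> sdepth_depth D' + ereal r \<le> sdepth_depth D"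
  shows "sdepth n' I' J' + ereal r \<le> sdepth n I J"
proof (cases "{D'. stanley_decomp n' I' J' D'} = {}")
  case True
  then have "sdepth n' I' J' = -\<infinity>"
    unfolding sdepth_def by (simp only: image_empty Sup_empty bot_ereal_def)
  then show ?thesis by simp
next
  case False
  have "sdepth n' I' J' + ereal r = (SUP D'\<in>{D'. stanley_decomp n' I' J' D'}. sdepth_depth D' + ereal r)"
    unfolding sdepth_def using False by (simp add: SUP_ereal_add_left)
  also have "\<dots> \<le> sdepth n I J"
    unfolding sdepth_def using assms by (intro SUP_least) (blast intro: SUP_upper2)
  finally show ?thesis .
qed

lemma stanley_decomp_preimage:
  assumes \<phi>: "mono_on (Nn n) \<phi>" "g \<in> Nn n" "changes_sdepth n n' \<phi> l g g'"
    and I: "monomial_ideal n {a \<in> Nn n. \<phi> a \<in> I'}" "\<forall>a\<in>min_gens {a \<in> Nn n. \<phi> a \<in> I'}. a \<le> g"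
    and J: "monomial_ideal n {a \<in> Nn n. \<phi> a \<in> J'}" "\<forall>a\<in>min_gens {a \<in> Nn n. \<phi> a \<in> J'}. a \<le> g"
    and D': "stanley_decomp n' I' J' D'"
  shows "\<exists>D. stanley_decomp n {a \<in> Nn n. \<phi> a \<in> I'} {a \<in> Nn n. \<phi> a \<in> J'} D \<and>
    sdepth_depth D' + ereal (real_of_int l) \<le> sdepth_depth D"
proof -
  have "\<forall>(a', b')\<in>stanley_cut g' D'. b' \<le> g'"
    unfolding stanley_cut_def using stanley_corner_le by auto
  then obtain Q where Q: "interval_partition n Q {c \<in> Nn n. c \<le> g \<and> \<phi> c \<in> (I' - J') \<inter> {..g'}}"
    and Q_card: "\<forall>(a, b)\<in>Q. \<exists>(a', b')\<in>stanley_cut g' D'.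
      int (card (maxed_coords n g b)) \<ge> int (card (maxed_coords n' g' b')) + l"
    using interval_partition_preimage[OF \<phi>(3) interval_partition_stanley_cut[OF D']] by blast
  have "\<phi> c \<le> g'" if "c \<in> Nn n" "c \<le> g" for c
    using mono_onD[OF \<phi>(1) that(1) \<phi>(2) that(2)] \<phi>(3) unfolding changes_sdepth_def by auto
  then have "{c \<in> Nn n. c \<le> g \<and> \<phi> c \<in> (I' - J') \<inter> {..g'}}
    = {c \<in> Nn n. c \<le> g \<and> c \<in> {a \<in> Nn n. \<phi> a \<in> I'} - {a \<in> Nn n. \<phi> a \<in> J'}}" by auto
  then have lift: "stanley_decomp n {a \<in> Nn n. \<phi> a \<in> I'} {a \<in> Nn n. \<phi> a \<in> J'} (stanley_lift n g Q)"
    using stanley_decomp_stanley_lift[OF I J] Q by simp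
  have "sdepth_depth D' + ereal (real_of_int l) \<le> ereal (real (card (maxed_coords n g b)))"
    if ab: "(a, b) \<in> Q" for a b
  proof -
    obtain a' b' where "(a', b') \<in> stanley_cut g' D'"
      and card: "int (card (maxed_coords n g b)) \<ge> int (card (maxed_coords n' g' b')) + l"
      using Q_card ab by blast
    then obtain Z where Z: "(a', Z) \<in> D'" "b' = stanley_corner g' a' Z"
      unfolding mem_stanley_cut_iff by blast
    have "Z \<subseteq> {..<n'}" using D' Z(1) unfolding stanley_decomp_def by blast
    then have "card Z \<le> card (maxed_coords n' g' b')"
      unfolding Z(2) by (intro card_mono subset_maxed_coords_stanley_corner) (simp_all add: maxed_coords_def)
    then have "real_of_int (int (card Z) + l) \<le> real (card (maxed_coords n g b))" using card by linarith
    moreover have "sdepth_depth D' + ereal (real_of_int l) \<le> ereal (real (card Z)) + ereal (real_of_int l)"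
      using sdepth_depth_le_card[OF Z(1)] by (intro add_right_mono) simp
    ultimately show ?thesis by (simp add: order_trans)
  qed
  then show ?thesis using lift sdepth_depth_stanley_lift by blast
qed

theorem proposition3p3:
  fixes n n' :: nat
    and \<phi> :: "(nat \<Rightarrow> nat) \<Rightarrow> (nat \<Rightarrow> nat)"
    and I' J' :: "(nat \<Rightarrow> nat) set"
    and g g' :: "nat \<Rightarrow> nat"
    and l :: int
  assumes "monomial_ideal n' I'" and "monomial_ideal n' J'" and "J' \<subset> I'"
    and "\<phi> ` Nn n \<subseteq> Nn n'" and "mono_on (Nn n) \<phi>"
    and "g \<in> Nn n" and "g' \<in> Nn n'"
    and "\<forall>a\<in>min_gens {a \<in> Nn n. \<phi> a \<in> I'}. a \<le> g"
    and "\<forall>a\<in>min_gens {a \<in> Nn n. \<phi> a \<in> J'}. a \<le> g"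
    and "\<forall>a\<in>min_gens I'. a \<le> g'"
    and "\<forall>a\<in>min_gens J'. a \<le> g'"
    and "changes_sdepth n n' \<phi> l g g'"
  shows "monomial_ideal n {a \<in> Nn n. \<phi> a \<in> I'} \<and> monomial_ideal n {a \<in> Nn n. \<phi> a \<in> J'} \<and>
         sdepth n {a \<in> Nn n. \<phi> a \<in> I'} {a \<in> Nn n. \<phi> a \<in> J'} \<ge> sdepth n' I' J' + ereal (real_of_int l)"
proof -
  have I: "monomial_ideal n {a \<in> Nn n. \<phi> a \<in> I'}"
    using monomial_ideal_preimage[OF assms(1,4,5)] .
  have J: "monomial_ideal n {a \<in> Nn n. \<phi> a \<in> J'}"
    using monomial_ideal_preimage[OF assms(2,4,5)] .
  have "sdepth n' I' J' + ereal (real_of_int l) \<le> sdepth n {a \<in> Nn n. \<phi> a \<in> I'} {a \<in> Nn n. \<phi> a \<in> J'}"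
    using stanley_decomp_preimage[OF assms(5,6,12) I assms(8) J assms(9)] by (rule sdepth_add_le)
  with I J show ?thesis by blast
qed

end
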